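(* Let $\mathcal{M},\mathcal{N}\subset\mathbb{R}^n$ be two manifolds that are $\mathcal{C}^k$-smooth ($k\geq 2$) around a point $\bar{x}\in\mathcal{M}\cap\mathcal{N}$, such that $\mathcal{M}\cap\mathcal{N}$ is a $\mathcal{C}^k$-smooth manifold around $\bar{x}$ and $\mathrm{T}_{\mathcal{M}\cap\mathcal{N}}(\bar{x})=\mathrm{T}_{\mathcal{M}}(\bar{x})\cap\mathrm{T}_{\mathcal{N}}(\bar{x})$. Let the parameters satisfy $\alpha\in(0,1]$, $\alpha_1,\alpha_2\in(0,2]$ and either (B1) $\alpha_1,\alpha_2\in(0,2)$, or (B2) $\alpha\in(0,1)$ with $\alpha_1\neq 2$ or $\alpha_2\neq 2$. Define $S_{\mathrm{T}(\bar{x})}\coloneqq(1-\alpha)I+\alpha\,\Pi^{\alpha_2}_{\mathrm{T}_{\mathcal{M}}(\bar{x})}\Pi^{\alpha_1}_{\mathrm{T}_{\mathcal{N}}(\bar{x})}$. Then \[ \mathrm{T}_{\mathcal{M}\cap\mathcal{N}}(\bar{x})=\mathrm{T}_{\mathcal{M}}(\bar{x})\cap\mathrm{T}_{\mathcal{N}}(\bar{x})=\mathrm{fix}\, S_{\mathrm{T}(\bar{x})} \] and \[ \Pi_{\mathrm{fix}\, S_{\mathrm{T}(\bar{x})}}=S_{\mathrm{T}(\bar{x})}^\infty , \] where $S^\infty\coloneqq\lim_{k\to\infty}S^k$.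
   Context: For a closed nonempty set $C$, $\Pi_C$ is the (unique) projection and $\Pi_C^{\alpha}\coloneqq(1-\alpha)I+\alpha\Pi_C$ is the relaxed projection. For a manifold $\mathcal{M}$ given locally as $\{x: F(x)=0\}$ with $F$ of class $\mathcal{C}^k$ with surjective derivative, the tangent space is $\mathrm{T}_{\mathcal{M}}(x)=\ker \mathrm{J}F(x)$. $\mathrm{fix}\,S\coloneqq\{x\mid Sx=x\}$. *)

theory Defs
  imports "HOL-Analysis.Analysis"
begin

text \<open>C^k smoothness on an open set U: all (Frechet-)directional derivatives up to
order k exist and are continuous on U (equivalently: all partial derivatives up to
order k exist and are continuous).\<close>
fun Ck_on :: "nat \<Rightarrow> 'a::real_normed_vector set \<Rightarrow> ('a \<Rightarrow> 'b::real_normed_vector) \<Rightarrow> bool" where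
  "Ck_on 0 U f = continuous_on U f"
| "Ck_on (Suc k) U f =
     ((\<forall>x\<in>U. f differentiable (at x)) \<and>
      (\<forall>v. Ck_on k U (\<lambda>x. frechet_derivative f (at x) v)))"

definition local_manifold_rep ::
  "nat \<Rightarrow> 'a::euclidean_space set \<Rightarrow> ('a \<Rightarrow> 'b::euclidean_space) \<Rightarrow> 'a set \<Rightarrow> 'a \<Rightarrow> bool" where
  "local_manifold_rep k M F U x \<longleftrightarrow>
     open U \<and> x \<in> U \<and> Ck_on k U F \<and> M \<inter> U = {y\<in>U. F y = 0} \<and>
     (\<forall>y\<in>U. surj (frechet_derivative F (at y)))"

definition tangent_space :: "('a::euclidean_space \<Rightarrow> 'b::euclidean_space) \<Rightarrow> 'a \<Rightarrow> 'a set" where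
  "tangent_space F x = {v. frechet_derivative F (at x) v = 0}"

definition rproj :: "real \<Rightarrow> 'a::euclidean_space set \<Rightarrow> 'a \<Rightarrow> 'a" where
  "rproj a C x = (1 - a) *\<^sub>R x + a *\<^sub>R closest_point C x"

definition fixset :: "('a \<Rightarrow> 'a) \<Rightarrow> 'a set" where
  "fixset S = {x. S x = x}"

end

theory Submission
  imports Defs
begin

text \<open>The tangent spaces \<open>A = T\<^sub>M(x)\<close> and \<open>B = T\<^sub>N(x)\<close> are linear subspaces, so the
relaxed projections \<open>R\<^sub>1 = \<Pi>\<^sub>B\<^sup>\<alpha>\<^sup>1\<close>, \<open>R\<^sub>2 = \<Pi>\<^sub>A\<^sup>\<alpha>\<^sup>2\<close> and \<open>S\<close> are linear and fix \<open>A \<inter> B\<close>.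
By Pythagoras \<open>\<parallel>\<Pi>\<^sub>C\<^sup>a y\<parallel>\<^sup>2 = \<parallel>y\<parallel>\<^sup>2 - a (2 - a) \<parallel>y - \<Pi>\<^sub>C y\<parallel>\<^sup>2\<close>, whence
\<open>\<parallel>S w\<parallel>\<^sup>2 = \<parallel>w\<parallel>\<^sup>2 - \<alpha> ((1 - \<alpha>) \<parallel>w - R\<^sub>2 R\<^sub>1 w\<parallel>\<^sup>2 + \<alpha>\<^sub>1 (2 - \<alpha>\<^sub>1) \<parallel>w - \<Pi>\<^sub>B w\<parallel>\<^sup>2 + \<alpha>\<^sub>2 (2 - \<alpha>\<^sub>2) \<parallel>R\<^sub>1 w - \<Pi>\<^sub>A R\<^sub>1 w\<parallel>\<^sup>2)\<close>,
and under either parameter regime the bracket vanishes only for \<open>w \<in> A \<inter> B\<close>. So \<open>S\<close> strictly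
shortens every vector outside \<open>A \<inter> B\<close>, and \<open>fix S = A \<inter> B\<close>. As \<open>S\<close> preserves inner products
with \<open>A \<inter> B\<close>, it maps the orthogonal complement of \<open>A \<inter> B\<close> into itself, where compactness of
the unit sphere makes it a contraction; hence \<open>S\<^sup>j x \<longrightarrow> \<Pi>\<^sub>A\<^sub>\<inter>\<^sub>B x\<close>.\<close>

lemma closest_point_subspace:
  fixes A :: "'a::euclidean_space set"
  assumes "subspace A"
  shows "closest_point A x \<in> A"
  using assms by (intro closest_point_in_set closed_subspace) (auto dest: subspace_0)

lemma closest_point_subspace_orthogonal:
  fixes A :: "'a::euclidean_space set"
  assumes "subspace A" "y \<in> A"
  shows "(x - closest_point A x) \<bullet> y = 0"
proof -
  let ?p = "closest_point A x"
  have "?p \<in> A"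
    using assms(1) by (rule closest_point_subspace)
  then have "?p + y \<in> A" "?p - y \<in> A"
    using assms by (auto intro: subspace_add subspace_diff)
  then have "(x - ?p) \<bullet> (?p + y - ?p) \<le> 0" "(x - ?p) \<bullet> (?p - y - ?p) \<le> 0"
    using closest_point_dot[OF subspace_imp_convex closed_subspace, OF assms(1) assms(1)] by blast+
  then show ?thesis
    by simp
qed

lemma closest_point_subspace_unique:
  fixes A :: "'a::euclidean_space set"
  assumes "subspace A" "p \<in> A" "\<And>y. y \<in> A \<Longrightarrow> (x - p) \<bullet> y = 0"
  shows "closest_point A x = p"
proof -
  let ?q = "closest_point A x"
  have "?q - p \<in> A"
    using assms(1,2) closest_point_subspace subspace_diff by blast
  then have "(x - p) \<bullet> (?q - p) - (x - ?q) \<bullet> (?q - p) = 0"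
    using assms(1,3) closest_point_subspace_orthogonal by simp
  then have "(?q - p) \<bullet> (?q - p) = 0"
    by (simp add: inner_diff_left)
  then show ?thesis
    by simp
qed

lemma linear_closest_point_subspace:
  fixes A :: "'a::euclidean_space set"
  assumes "subspace A"
  shows "linear (closest_point A)"
proof (rule linearI)
  fix x y :: 'a
  show "closest_point A (x + y) = closest_point A x + closest_point A y"
  proof (rule closest_point_subspace_unique[OF assms])
    show "closest_point A x + closest_point A y \<in> A"
      using assms closest_point_subspace subspace_add by blast
    fix z assume "z \<in> A"
    then have "(x - closest_point A x) \<bullet> z + (y - closest_point A y) \<bullet> z = 0"
      using closest_point_subspace_orthogonal[OF assms, of z] by simp
    then show "(x + y - (closest_point A x + closest_point A y)) \<bullet> z = 0"
      by (simp add: inner_diff_left inner_add_left)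
  qed
next
  fix r and x :: 'a
  show "closest_point A (r *\<^sub>R x) = r *\<^sub>R closest_point A x"
  proof (rule closest_point_subspace_unique[OF assms])
    show "r *\<^sub>R closest_point A x \<in> A"
      using assms closest_point_subspace subspace_scale by blast
    fix z assume "z \<in> A"
    then have "r * ((x - closest_point A x) \<bullet> z) = 0"
      using closest_point_subspace_orthogonal[OF assms, of z x] by simp
    then show "(r *\<^sub>R x - r *\<^sub>R closest_point A x) \<bullet> z = 0"
      by (simp add: inner_diff_left)
  qed
qed

lemma linear_rproj:
  fixes A :: "'a::euclidean_space set"
  assumes "subspace A"
  shows "linear (rproj a A)"
  using linear_closest_point_subspace[OF assms] unfolding rproj_def
  by (intro linearI) (simp_all add: linear_add linear_scale algebra_simps)

lemma rproj_self:
  assumes "y \<in> A"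
  shows "rproj a A y = y"
  using assms by (simp add: rproj_def closest_point_self algebra_simps)

lemma rproj_eq_self_iff:
  fixes A :: "'a::euclidean_space set"
  assumes "closed A" "A \<noteq> {}" "a \<noteq> 0"
  shows "rproj a A y = y \<longleftrightarrow> y \<in> A"
proof -
  have "rproj a A y - y = a *\<^sub>R (closest_point A y - y)"
    by (simp add: rproj_def algebra_simps)
  then show ?thesis
    using assms closest_point_refl[OF assms(1,2)] by (metis eq_iff_diff_eq_0 scale_eq_0_iff)
qed

lemma inner_rproj_subspace:
  fixes A :: "'a::euclidean_space set"
  assumes "subspace A" "f \<in> A"
  shows "rproj a A y \<bullet> f = y \<bullet> f"
proof -
  have "rproj a A y = y - a *\<^sub>R (y - closest_point A y)"
    by (simp add: rproj_def algebra_simps)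
  then show ?thesis
    using closest_point_subspace_orthogonal[OF assms] by (simp add: inner_diff_left)
qed

lemma norm_rproj_power2:
  fixes A :: "'a::euclidean_space set"
  assumes "subspace A"
  shows "(norm (rproj a A y))\<^sup>2 = (norm y)\<^sup>2 - a * (2 - a) * (norm (y - closest_point A y))\<^sup>2"
proof -
  let ?p = "closest_point A y"
  have orth: "orthogonal ?p (c *\<^sub>R (y - ?p))" for c
    using closest_point_subspace_orthogonal[OF assms closest_point_subspace[OF assms]]
    by (simp add: orthogonal_def inner_commute)
  have "rproj a A y = ?p + (1 - a) *\<^sub>R (y - ?p)"
    by (simp add: rproj_def algebra_simps)
  then have "(norm (rproj a A y))\<^sup>2 = (norm ?p)\<^sup>2 + (1 - a)\<^sup>2 * (norm (y - ?p))\<^sup>2"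
    using norm_add_Pythagorean[OF orth] by (simp add: power_mult_distrib)
  moreover have "(norm y)\<^sup>2 = (norm ?p)\<^sup>2 + (norm (y - ?p))\<^sup>2"
    using norm_add_Pythagorean[OF orth[of 1]] by simp
  ultimately show ?thesis
    by (simp add: power2_eq_square algebra_simps)
qed

definition averaged_rproj ::
  "real \<Rightarrow> real \<Rightarrow> real \<Rightarrow> 'a::euclidean_space set \<Rightarrow> 'a set \<Rightarrow> 'a \<Rightarrow> 'a" where
  "averaged_rproj \<alpha> \<alpha>1 \<alpha>2 A B x = (1 - \<alpha>) *\<^sub>R x + \<alpha> *\<^sub>R rproj \<alpha>2 A (rproj \<alpha>1 B x)"

lemma linear_averaged_rproj:
  assumes "subspace A" "subspace B"
  shows "linear (averaged_rproj \<alpha> \<alpha>1 \<alpha>2 A B)"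
  using linear_rproj[OF assms(1)] linear_rproj[OF assms(2)] unfolding averaged_rproj_def
  by (intro linearI) (simp_all add: linear_add linear_scale algebra_simps)

lemma averaged_rproj_self:
  assumes "x \<in> A \<inter> B"
  shows "averaged_rproj \<alpha> \<alpha>1 \<alpha>2 A B x = x"
  using assms by (simp add: averaged_rproj_def rproj_self algebra_simps)

lemma inner_averaged_rproj:
  assumes "subspace A" "subspace B" "f \<in> A \<inter> B"
  shows "averaged_rproj \<alpha> \<alpha>1 \<alpha>2 A B w \<bullet> f = w \<bullet> f"
  using assms by (simp add: averaged_rproj_def inner_rproj_subspace inner_add_left algebra_simps)

lemma norm_convex_combination_power2:
  fixes w v :: "'a::real_inner"
  shows "(norm ((1 - t) *\<^sub>R w + t *\<^sub>R v))\<^sup>2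
     = (1 - t) * (norm w)\<^sup>2 + t * (norm v)\<^sup>2 - t * (1 - t) * (norm (w - v))\<^sup>2"
  unfolding power2_norm_eq_inner
  by (simp add: inner_add_left inner_add_right inner_diff_left inner_diff_right inner_commute[of v w])
     (simp add: algebra_simps)

lemma norm_averaged_rproj_power2:
  fixes w :: "'a::euclidean_space" and \<alpha>1 :: real
  assumes "subspace A" "subspace B"
  defines "u \<equiv> rproj \<alpha>1 B w"
  shows "(norm (averaged_rproj \<alpha> \<alpha>1 \<alpha>2 A B w))\<^sup>2 = (norm w)\<^sup>2
     - \<alpha> * ((1 - \<alpha>) * (norm (w - rproj \<alpha>2 A u))\<^sup>2
            + \<alpha>1 * (2 - \<alpha>1) * (norm (w - closest_point B w))\<^sup>2
            + \<alpha>2 * (2 - \<alpha>2) * (norm (u - closest_point A u))\<^sup>2)"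
proof -
  let ?v = "rproj \<alpha>2 A u"
  have "(norm (averaged_rproj \<alpha> \<alpha>1 \<alpha>2 A B w))\<^sup>2
      = (1 - \<alpha>) * (norm w)\<^sup>2 + \<alpha> * (norm ?v)\<^sup>2 - \<alpha> * (1 - \<alpha>) * (norm (w - ?v))\<^sup>2"
    unfolding averaged_rproj_def u_def by (rule norm_convex_combination_power2)
  moreover have "(norm ?v)\<^sup>2 = (norm w)\<^sup>2 - \<alpha>1 * (2 - \<alpha>1) * (norm (w - closest_point B w))\<^sup>2
      - \<alpha>2 * (2 - \<alpha>2) * (norm (u - closest_point A u))\<^sup>2"
    using norm_rproj_power2[OF assms(1), of \<alpha>2 u] norm_rproj_power2[OF assms(2), of \<alpha>1 w]
    unfolding u_def by simp
  ultimately show ?thesis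
    by (simp only:) (simp add: algebra_simps)
qed

lemma mem_Int_if_rproj_conditions:
  fixes A B :: "'a::euclidean_space set"
  assumes A: "subspace A" and B: "subspace B"
    and "0 < \<alpha>1" "\<alpha>1 \<le> 2" "0 < \<alpha>2" "\<alpha>2 \<le> 2"
    and "(\<alpha>1 < 2 \<and> \<alpha>2 < 2) \<or> (\<alpha> < 1 \<and> (\<alpha>1 \<noteq> 2 \<or> \<alpha>2 \<noteq> 2))"
    and fixed: "\<alpha> < 1 \<Longrightarrow> rproj \<alpha>2 A (rproj \<alpha>1 B w) = w"
    and w_in_B: "\<alpha>1 < 2 \<Longrightarrow> w \<in> B"
    and image_in_A: "\<alpha>2 < 2 \<Longrightarrow> rproj \<alpha>1 B w \<in> A"
  shows "w \<in> A \<inter> B"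
proof -
  have closed: "closed A" "closed B" and nonempty: "A \<noteq> {}" "B \<noteq> {}"
    using A B closed_subspace subspace_0 by blast+
  show ?thesis
  proof (cases "\<alpha>1 < 2")
    case True
    then have "w \<in> B" "rproj \<alpha>1 B w = w"
      using w_in_B rproj_self by auto
    moreover have "w \<in> A"
    proof (cases "\<alpha>2 < 2")
      case True
      then show ?thesis
        using image_in_A \<open>rproj \<alpha>1 B w = w\<close> by simp
    next
      case False
      then have "rproj \<alpha>2 A w = w"
        using assms(7) fixed \<open>rproj \<alpha>1 B w = w\<close> by auto
      then show ?thesis
        using rproj_eq_self_iff[OF closed(1) nonempty(1)] \<open>0 < \<alpha>2\<close> by simp
    qed
    ultimately show ?thesis
      by simp
  next
    case False
    then have "\<alpha> < 1" "\<alpha>2 < 2"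
      using assms(4,6,7) by auto
    then have "rproj \<alpha>1 B w \<in> A" "rproj \<alpha>1 B w = w"
      using image_in_A fixed rproj_self[of "rproj \<alpha>1 B w" A \<alpha>2] by auto
    then show ?thesis
      using rproj_eq_self_iff[OF closed(2) nonempty(2)] \<open>0 < \<alpha>1\<close> by simp
  qed
qed

lemma norm_averaged_rproj_less:
  fixes A B :: "'a::euclidean_space set"
  assumes A: "subspace A" and B: "subspace B"
    and "0 < \<alpha>" "\<alpha> \<le> 1" "0 < \<alpha>1" "\<alpha>1 \<le> 2" "0 < \<alpha>2" "\<alpha>2 \<le> 2"
    and "(\<alpha>1 < 2 \<and> \<alpha>2 < 2) \<or> (\<alpha> < 1 \<and> (\<alpha>1 \<noteq> 2 \<or> \<alpha>2 \<noteq> 2))"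
    and "w \<notin> A \<inter> B"
  shows "norm (averaged_rproj \<alpha> \<alpha>1 \<alpha>2 A B w) < norm w"
proof (rule ccontr)
  define u where "u = rproj \<alpha>1 B w"
  define d where "d = (1 - \<alpha>) * (norm (w - rproj \<alpha>2 A u))\<^sup>2"
  define d1 where "d1 = \<alpha>1 * (2 - \<alpha>1) * (norm (w - closest_point B w))\<^sup>2"
  define d2 where "d2 = \<alpha>2 * (2 - \<alpha>2) * (norm (u - closest_point A u))\<^sup>2"
  assume "\<not> norm (averaged_rproj \<alpha> \<alpha>1 \<alpha>2 A B w) < norm w"
  then have "(norm w)\<^sup>2 \<le> (norm (averaged_rproj \<alpha> \<alpha>1 \<alpha>2 A B w))\<^sup>2"
    by (simp add: power_mono)
  then have "\<alpha> * (d + d1 + d2) \<le> 0"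
    using norm_averaged_rproj_power2[OF A B, of \<alpha> \<alpha>1 \<alpha>2 w]
    by (simp add: u_def d_def d1_def d2_def)
  then have "d + d1 + d2 \<le> 0"
    using \<open>0 < \<alpha>\<close> by (simp add: mult_le_0_iff)
  moreover have "d \<ge> 0" "d1 \<ge> 0" "d2 \<ge> 0"
    using assms(3-8) by (simp_all add: d_def d1_def d2_def)
  ultimately have "d = 0" "d1 = 0" "d2 = 0"
    by linarith+
  then have "w \<in> A \<inter> B"
    using closest_point_refl[OF closed_subspace[OF A], of u] closest_point_refl[OF closed_subspace[OF B], of w]
      subspace_0[OF A] subspace_0[OF B] assms(3-8)
    by (intro mem_Int_if_rproj_conditions[OF A B assms(5-9)]) (auto simp: u_def d_def d1_def d2_def)
  with assms(10) show False
    by contradiction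
qed

lemma linear_contraction_on_subspace:
  fixes T :: "'a::euclidean_space \<Rightarrow> 'b::real_normed_vector"
  assumes "linear T" "subspace V" and less: "\<And>w. w \<in> V \<Longrightarrow> w \<noteq> 0 \<Longrightarrow> norm (T w) < norm w"
  obtains c where "0 \<le> c" "c < 1" "\<And>w. w \<in> V \<Longrightarrow> norm (T w) \<le> c * norm w"
proof (cases "V \<subseteq> {0}")
  case True
  then show ?thesis
    using that[of 0] linear_0[OF assms(1)] by auto
next
  case False
  then obtain w0 where "w0 \<in> V" "w0 \<noteq> 0"
    by blast
  then have "V \<inter> sphere 0 1 \<noteq> {}"
    using subspace_scale[OF assms(2)] by (intro ex_in_conv[THEN iffD1] exI[of _ "w0 /\<^sub>R norm w0"]) simp
  moreover have "compact (V \<inter> sphere 0 1)"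
    using closed_subspace[OF assms(2)] by (intro closed_Int_compact) auto
  moreover have "continuous_on (V \<inter> sphere 0 1) (\<lambda>y. norm (T y))"
    using linear_continuous_on[OF linear_conv_bounded_linear[THEN iffD1, OF assms(1)]]
    by (intro continuous_on_norm) (auto intro: continuous_on_subset)
  ultimately obtain z where z: "z \<in> V \<inter> sphere 0 1"
    and z_max: "\<And>y. y \<in> V \<inter> sphere 0 1 \<Longrightarrow> norm (T y) \<le> norm (T z)"
    using continuous_attains_sup[of "V \<inter> sphere 0 1" "\<lambda>y. norm (T y)"] by blast
  have "norm (T w) \<le> norm (T z) * norm w" if "w \<in> V" for w
  proof (cases "w = 0")
    case True
    then show ?thesis
      using linear_0[OF assms(1)] by simp
  next
    case False
    then have "norm (T (w /\<^sub>R norm w)) \<le> norm (T z)"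
      using that subspace_scale[OF assms(2)] by (intro z_max) simp
    then show ?thesis
      using False by (simp add: linear_scale[OF assms(1)] field_simps)
  qed
  moreover have "norm (T z) < 1"
    using less[of z] z by fastforce
  ultimately show ?thesis
    using that[of "norm (T z)"] by simp
qed

lemma linear_iterates_tendsto_closest_point:
  fixes T :: "'a::euclidean_space \<Rightarrow> 'a"
  assumes "linear T" "subspace F"
    and fixes_F: "\<And>f. f \<in> F \<Longrightarrow> T f = f"
    and inner_F: "\<And>w f. f \<in> F \<Longrightarrow> T w \<bullet> f = w \<bullet> f"
    and less: "\<And>w. w \<notin> F \<Longrightarrow> norm (T w) < norm w"
  shows "(\<lambda>j. (T ^^ j) x) \<longlonglongrightarrow> closest_point F x"
proof -
  have T_perp: "T w \<in> F\<^sup>\<bottom>" if "w \<in> F\<^sup>\<bottom>" for w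
    using that inner_F by (simp add: orthogonal_comp_def orthogonal_def inner_commute)
  have "norm (T w) < norm w" if "w \<in> F\<^sup>\<bottom>" "w \<noteq> 0" for w
    using that orthogonal_Int_0[OF assms(2)] less by blast
  then obtain c where c: "0 \<le> c" "c < 1"
    and contraction: "\<And>w. w \<in> F\<^sup>\<bottom> \<Longrightarrow> norm (T w) \<le> c * norm w"
    using linear_contraction_on_subspace[OF assms(1) subspace_orthogonal_comp] by blast
  have decay: "(T ^^ j) w \<in> F\<^sup>\<bottom> \<and> norm ((T ^^ j) w) \<le> c ^ j * norm w" if "w \<in> F\<^sup>\<bottom>" for w j
  proof (induction j)
    case 0
    show ?case
      using that by simp
  next
    case (Suc j)
    then have "norm ((T ^^ Suc j) w) \<le> c * (c ^ j * norm w)"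
      using contraction[of "(T ^^ j) w"] c(1) by (auto intro: order_trans mult_left_mono)
    with Suc show ?case
      using T_perp by simp
  qed
  define p where "p = closest_point F x"
  have "p \<in> F"
    unfolding p_def using assms(2) by (rule closest_point_subspace)
  have "x - p \<in> F\<^sup>\<bottom>"
    using closest_point_subspace_orthogonal[OF assms(2)]
    by (simp add: p_def orthogonal_comp_def orthogonal_def inner_commute)
  have shift: "(T ^^ j) x = (T ^^ j) (x - p) + p" for j
  proof (induction j)
    case 0
    show ?case
      by simp
  next
    case (Suc j)
    then show ?case
      using linear_add[OF assms(1)] fixes_F[OF \<open>p \<in> F\<close>] by simp
  qed
  have "(\<lambda>j. (T ^^ j) (x - p)) \<longlonglongrightarrow> 0"
  proof (rule Lim_null_comparison)
    show "\<forall>\<^sub>F j in sequentially. norm ((T ^^ j) (x - p)) \<le> c ^ j * norm (x - p)"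
      using decay[OF \<open>x - p \<in> F\<^sup>\<bottom>\<close>] by simp
    show "(\<lambda>j. c ^ j * norm (x - p)) \<longlonglongrightarrow> 0"
      using c by (intro tendsto_mult_left_zero LIMSEQ_power_zero) simp
  qed
  then have "(\<lambda>j. (T ^^ j) (x - p) + p) \<longlonglongrightarrow> 0 + p"
    by (intro tendsto_add) auto
  then show ?thesis
    by (simp add: shift p_def)
qed

lemma fixset_eqI:
  fixes T :: "'a::real_normed_vector \<Rightarrow> 'a"
  assumes "\<And>f. f \<in> F \<Longrightarrow> T f = f" "\<And>w. w \<notin> F \<Longrightarrow> norm (T w) < norm w"
  shows "fixset T = F"
  using assms unfolding fixset_def by force

lemma local_manifold_rep_differentiable:
  assumes "local_manifold_rep k M F U x" "k \<noteq> 0"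
  shows "F differentiable (at x)"
  using assms by (cases k) (auto simp: local_manifold_rep_def)

lemma subspace_tangent_space:
  assumes "F differentiable (at x)"
  shows "subspace (tangent_space F x)"
  unfolding tangent_space_def by (rule linear_subspace_kernel[OF linear_frechet_derivative[OF assms]])

theorem proposition3:
  fixes M N :: "'a::euclidean_space set" and xbar :: 'a and k :: nat
    and FM :: "'a \<Rightarrow> 'b::euclidean_space" and FN :: "'a \<Rightarrow> 'c::euclidean_space"
    and FMN :: "'a \<Rightarrow> 'd::euclidean_space"
    and UM UNN UMN :: "'a set"
    and \<alpha> \<alpha>1 \<alpha>2 :: real
    and S :: "'a \<Rightarrow> 'a"
  assumes "k \<ge> 2"
    and "xbar \<in> M \<inter> N"
    and "local_manifold_rep k M FM UM xbar"
    and "local_manifold_rep k N FN UNN xbar"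
    and "local_manifold_rep k (M \<inter> N) FMN UMN xbar"
    and "tangent_space FMN xbar = tangent_space FM xbar \<inter> tangent_space FN xbar"
    and "0 < \<alpha>" "\<alpha> \<le> 1" "0 < \<alpha>1" "\<alpha>1 \<le> 2" "0 < \<alpha>2" "\<alpha>2 \<le> 2"
    and "(\<alpha>1 < 2 \<and> \<alpha>2 < 2) \<or> (\<alpha> < 1 \<and> (\<alpha>1 \<noteq> 2 \<or> \<alpha>2 \<noteq> 2))"
    and "S = (\<lambda>x. (1 - \<alpha>) *\<^sub>R x + \<alpha> *\<^sub>R
               rproj \<alpha>2 (tangent_space FM xbar) (rproj \<alpha>1 (tangent_space FN xbar) x))"
  shows "tangent_space FMN xbar = tangent_space FM xbar \<inter> tangent_space FN xbar
       \<and> tangent_space FM xbar \<inter> tangent_space FN xbar = fixset S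
       \<and> (\<forall>x. (\<lambda>j. (S ^^ j) x) \<longlonglongrightarrow> closest_point (fixset S) x)"
proof -
  let ?A = "tangent_space FM xbar" and ?B = "tangent_space FN xbar"
  have "FM differentiable (at xbar)" "FN differentiable (at xbar)"
    using assms(1) local_manifold_rep_differentiable[OF assms(3)]
      local_manifold_rep_differentiable[OF assms(4)] by simp_all
  then have A: "subspace ?A" and B: "subspace ?B"
    by (simp_all add: subspace_tangent_space)
  have S: "S = averaged_rproj \<alpha> \<alpha>1 \<alpha>2 ?A ?B"
    using assms(14) by (simp add: fun_eq_iff averaged_rproj_def)
  have less: "\<And>w. w \<notin> ?A \<inter> ?B \<Longrightarrow> norm (S w) < norm w"
    unfolding S using A B assms(7-13) by (rule norm_averaged_rproj_less)
  have fixes_AB: "\<And>f. f \<in> ?A \<inter> ?B \<Longrightarrow> S f = f"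
    unfolding S by (rule averaged_rproj_self)
  have "fixset S = ?A \<inter> ?B"
    using fixes_AB less by (rule fixset_eqI)
  moreover have "(\<lambda>j. (S ^^ j) x) \<longlonglongrightarrow> closest_point (?A \<inter> ?B) x" for x
    using linear_averaged_rproj[OF A B] subspace_inter[OF A B] fixes_AB
      inner_averaged_rproj[OF A B] less
    unfolding S by (rule linear_iterates_tendsto_closest_point)
  ultimately show ?thesis
    \<comment> \<open>the first conjunct is hypothesis 6, the only place where \<open>M \<inter> N\<close> enters\<close>
    using assms(6) by simp
qed

end
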